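(* In the setting described in the context, let $\mathcal{J},\mathcal{J}'\subseteq\mathcal{I}$ be arbitrary, and put $\mathcal{J}_\cup=\mathcal{J}\cup\mathcal{J}'$, $\mathcal{J}_\cap=\mathcal{J}\cap\mathcal{J}'$. Then $$ \operatorname{Cov}(\mathbf{c}_{\mathcal{J}},\mathbf{c}_{\mathcal{J}'}) \;=\; \sum_{\mathcal{S}\subseteq\mathcal{J}_\cup} t_{\mathcal{S}}\,(q-p)^{|\mathcal{S}|}\,p^{|\mathcal{J}_\cup|-|\mathcal{S}|}\Big(1-(q+p)^{|\mathcal{S}\cap\mathcal{J}_\cap|}\,p^{|\mathcal{J}_\cap|-|\mathcal{S}\cap\mathcal{J}_\cap|}\Big), $$ with $t_\emptyset=N$.
   Context: Setting: Let $N\ge 1$, let $\mathcal{I}$ be a finite set of column indices, and let $X\in\{0,1\}^{N\times\mathcal{I}}$ be a fixed (ground-truth) binary matrix with rows $n=1,\dots,N$. Fix probabilities $0\le p<q\le 1$. The perturbed ("evidence") matrix $\hat{X}$ is a random matrix in $\{0,1\}^{N\times\mathcal{I}}$ whose entries are mutually independent, with $\hat X_{ni}\sim\mathrm{Bernoulli}(q)$ if $X_{ni}=1$ and $\hat X_{ni}\sim\mathrm{Bernoulli}(p)$ if $X_{ni}=0$. For $\mathcal{S}\subseteq\mathcal{I}$ define the true co-occurrence count $t_{\mathcal{S}}=\#\{n : X_{ni}=1 \text{ for all } i\in\mathcal{S}\}$ (so $t_\emptyset=N$) and the perturbed co-occurrence count $\mathbf{c}_{\mathcal{S}}=\sum_{n=1}^N\prod_{i\in\mathcal{S}}\hat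 X_{ni}$ (so $\mathbf{c}_\emptyset=N$). *)

theory Defs
  imports "HOL-Probability.Probability"
begin

definition pmf_covariance :: "'a pmf \<Rightarrow> ('a \<Rightarrow> real) \<Rightarrow> ('a \<Rightarrow> real) \<Rightarrow> real" where
  "pmf_covariance M f g =
     measure_pmf.expectation M (\<lambda>x. (f x - measure_pmf.expectation M f) *
                                    (g x - measure_pmf.expectation M g))"

text \<open>Distribution of the perturbed (evidence) matrix: rows 1..N, columns I; entries
  independent, Bernoulli(q) where the ground truth X is 1 (True), Bernoulli(p) where it is 0.
  Entries outside {1..N} x I are fixed to False (irrelevant).\<close>
definition evidence_pmf ::
  "nat \<Rightarrow> 'i set \<Rightarrow> (nat \<Rightarrow> 'i \<Rightarrow> bool) \<Rightarrow> real \<Rightarrow> real \<Rightarrow> (nat \<times> 'i \<Rightarrow> bool) pmf" where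
  "evidence_pmf N I X p q =
     Pi_pmf ({1..N} \<times> I) False (\<lambda>(n, i). bernoulli_pmf (if X n i then q else p))"

definition true_count :: "nat \<Rightarrow> (nat \<Rightarrow> 'i \<Rightarrow> bool) \<Rightarrow> 'i set \<Rightarrow> nat" where
  "true_count N X S = card {n \<in> {1..N}. \<forall>i\<in>S. X n i}"

definition pert_count :: "nat \<Rightarrow> 'i set \<Rightarrow> (nat \<times> 'i \<Rightarrow> bool) \<Rightarrow> real" where
  "pert_count N S Xh = (\<Sum>n = 1..N. \<Prod>i\<in>S. (if Xh (n, i) then 1 else 0))"

end

theory Submission imports Defs begin

text \<open>Rows of the evidence matrix are independent, so only the diagonal terms n = m of
  Cov(c_J, c_J') = sum over n, m of Cov([row n is 1 on J], [row m is 1 on J']) survive.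
  Row n is all ones on K with probability P_n(K) = prod_{i in K} r_ni, where r_ni is q if X n i
  and p otherwise, so the diagonal term is P_n(J \<union> J') - P_n(J) P_n(J') =
  P_n(J \<union> J') (1 - P_n(J \<inter> J')). Writing r_ni = [X n i] (q - p) + p and expanding the products
  over subsets S of J \<union> J' produces the weights t_S; the factor q + p comes from
  q^2 = (q - p)(q + p) + p^2 on the columns of J \<inter> J'.\<close>

definition row_prob :: "(nat \<Rightarrow> 'i \<Rightarrow> bool) \<Rightarrow> real \<Rightarrow> real \<Rightarrow> nat \<Rightarrow> 'i set \<Rightarrow> real" where
  "row_prob X p q n K = (\<Prod>i\<in>K. if X n i then q else p)"

lemma prod_if_zero:
  assumes "finite K"
  shows "(\<Prod>x\<in>K. if P x then c else 0 :: 'a :: comm_semiring_1) = (if \<forall>x\<in>K. P x then c ^ card K else 0)"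
  using assms by (induction K rule: finite_induct) auto

lemma prod_if_mult_prod_if_eq_sum_Pow:
  fixes p q :: "'a :: comm_ring_1"
  assumes "finite U" "C \<subseteq> U"
  shows "(\<Prod>i\<in>U. if A i then q else p) * (\<Prod>i\<in>C. if A i then q else p) =
    (\<Sum>S\<in>Pow U. (if \<forall>i\<in>S. A i then 1 else 0) * ((q - p) ^ card S * p ^ (card U - card S) *
       ((q + p) ^ card (S \<inter> C) * p ^ (card C - card (S \<inter> C)))))"
proof -
  define a where "a i = (if A i then q - p else 0) * (if i \<in> C then q + p else 1)" for i
  define b where "b i = p * (if i \<in> C then p else 1)" for i
  have "(\<Prod>i\<in>U. if A i then q else p) * (\<Prod>i\<in>C. if A i then q else p)
      = (\<Prod>i\<in>U. (if A i then q else p) * (if i \<in> C then (if A i then q else p) else 1))"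
    using assms by (simp add: prod.distrib prod.If_cases Int_absorb1)
  also have "\<dots> = (\<Prod>i\<in>U. a i + b i)"
    by (intro prod.cong) (auto simp: a_def b_def algebra_simps power2_eq_square)
  also have "\<dots> = (\<Sum>S\<in>Pow U. (\<Prod>i\<in>S. a i) * (\<Prod>i\<in>U - S. b i))"
    by (rule prod_add[OF assms(1)])
  also have "\<dots> = (\<Sum>S\<in>Pow U. (if \<forall>i\<in>S. A i then 1 else 0) * ((q - p) ^ card S *
      p ^ (card U - card S) * ((q + p) ^ card (S \<inter> C) * p ^ (card C - card (S \<inter> C)))))"
  proof (rule sum.cong)
    fix S assume "S \<in> Pow U"
    then have SU: "S \<subseteq> U" and fS: "finite S"
      using assms(1) finite_subset by auto
    have "(U - S) \<inter> C = C - S \<inter> C"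
      using assms(2) by auto
    then have "card ((U - S) \<inter> C) = card C - card (S \<inter> C)"
      using assms by (metis card_Diff_subset finite_Int finite_subset inf_le2)
    then have "(\<Prod>i\<in>U - S. b i) = p ^ (card U - card S) * p ^ (card C - card (S \<inter> C))"
      using assms(1) SU fS by (simp add: b_def prod.distrib prod.If_cases card_Diff_subset)
    moreover have "(\<Prod>i\<in>S. a i) =
        (if \<forall>i\<in>S. A i then 1 else 0) * (q - p) ^ card S * (q + p) ^ card (S \<inter> C)"
      using fS by (simp add: a_def prod.distrib prod_if_zero prod.If_cases)
    ultimately show "(\<Prod>i\<in>S. a i) * (\<Prod>i\<in>U - S. b i) =
        (if \<forall>i\<in>S. A i then 1 else 0) * ((q - p) ^ card S * p ^ (card U - card S) *
          ((q + p) ^ card (S \<inter> C) * p ^ (card C - card (S \<inter> C))))"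
      by simp
  qed simp
  finally show ?thesis .
qed

lemma prod_if_diff_mult_eq_sum_Pow:
  fixes p q :: "'a :: comm_ring_1"
  assumes "finite U" "C \<subseteq> U"
  shows "(\<Prod>i\<in>U. if A i then q else p) - (\<Prod>i\<in>U. if A i then q else p) * (\<Prod>i\<in>C. if A i then q else p) =
    (\<Sum>S\<in>Pow U. (if \<forall>i\<in>S. A i then 1 else 0) * ((q - p) ^ card S * p ^ (card U - card S) *
       (1 - (q + p) ^ card (S \<inter> C) * p ^ (card C - card (S \<inter> C)))))"
  using prod_if_mult_prod_if_eq_sum_Pow[OF assms, of A q p]
    prod_if_mult_prod_if_eq_sum_Pow[OF assms(1) empty_subsetI, of A q p]
  by (simp add: right_diff_distrib sum_subtractf)

lemma pmf_covariance_eq_expectation_mult_diff: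
  assumes "finite (set_pmf M)"
  shows "pmf_covariance M f g = measure_pmf.expectation M (\<lambda>x. f x * g x)
     - measure_pmf.expectation M f * measure_pmf.expectation M g"
proof -
  let ?a = "measure_pmf.expectation M f" and ?b = "measure_pmf.expectation M g"
  have int: "integrable M h" for h :: "_ \<Rightarrow> real"
    using assms by (rule integrable_measure_pmf_finite)
  have "(\<lambda>x. (f x - ?a) * (g x - ?b)) = (\<lambda>x. f x * g x - (?a * g x + ?b * f x) + ?a * ?b)"
    by (auto simp: algebra_simps)
  then show ?thesis
    by (simp add: pmf_covariance_def int Bochner_Integration.integral_diff
        Bochner_Integration.integral_add)
qed

lemma expectation_Pi_pmf_bernoulli_all:
  assumes "finite A" "K \<subseteq> A" "\<And>x. x \<in> K \<Longrightarrow> r x \<in> {0..1}"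
  shows "measure_pmf.expectation (Pi_pmf A d (\<lambda>x. bernoulli_pmf (r x)))
           (\<lambda>y. if \<forall>x\<in>K. y x then 1 else 0) = (\<Prod>x\<in>K. r x)"
proof -
  let ?M = "Pi_pmf A d (\<lambda>x. bernoulli_pmf (r x))"
  define B where "B x = (if x \<in> K then {True} else UNIV)" for x
  have "(\<lambda>y. if \<forall>x\<in>K. y x then 1 else 0 :: real) = indicator (Pi A B)"
    using assms(2) by (force simp: B_def indicator_def fun_eq_iff Pi_iff)
  then have "measure_pmf.expectation ?M (\<lambda>y. if \<forall>x\<in>K. y x then 1 else 0) =
      measure_pmf.prob ?M (Pi A B)"
    by simp
  also have "\<dots> = (\<Prod>x\<in>A. measure_pmf.prob (bernoulli_pmf (r x)) (B x))"
    by (rule measure_Pi_pmf_Pi[OF assms(1)])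
  also have "\<dots> = (\<Prod>x\<in>A. if x \<in> K then r x else 1)"
    using assms(3) by (intro prod.cong) (auto simp: B_def measure_pmf_single)
  also have "\<dots> = (\<Prod>x\<in>K. r x)"
    using assms(1,2) by (simp add: prod.If_cases Int_absorb1)
  finally show ?thesis .
qed

lemma evidence_pmf_eq_Pi_pmf:
  "evidence_pmf N I X p q =
     Pi_pmf ({1..N} \<times> I) False (\<lambda>x. bernoulli_pmf (if X (fst x) (snd x) then q else p))"
  by (simp add: evidence_pmf_def case_prod_unfold)

lemma finite_set_evidence_pmf:
  assumes "finite I"
  shows "finite (set_pmf (evidence_pmf N I X p q))"
proof (rule finite_subset)
  show "set_pmf (evidence_pmf N I X p q) \<subseteq> PiE_dflt ({1..N} \<times> I) False
     (set_pmf \<circ> (\<lambda>(n, i). bernoulli_pmf (if X n i then q else p)))"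
    unfolding evidence_pmf_def using assms by (intro set_Pi_pmf_subset') auto
qed (use assms in auto)

lemma expectation_evidence_pmf_all:
  assumes "finite I" "K \<subseteq> {1..N} \<times> I" "p \<in> {0..1}" "q \<in> {0..1}"
  shows "measure_pmf.expectation (evidence_pmf N I X p q) (\<lambda>y. if \<forall>x\<in>K. y x then 1 else 0) =
    (\<Prod>x\<in>K. if X (fst x) (snd x) then q else p)"
  unfolding evidence_pmf_eq_Pi_pmf
  using assms by (intro expectation_Pi_pmf_bernoulli_all) auto

lemma pert_count_eq_sum_rows:
  assumes "finite K"
  shows "pert_count N K = (\<lambda>y. \<Sum>n = 1..N. if \<forall>i\<in>K. y (n, i) then 1 else 0)"
  unfolding pert_count_def using assms by (intro ext sum.cong) (simp_all add: prod_if_zero)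

lemma expectation_row_indicator_mult:
  assumes "finite I" "J \<subseteq> I" "J' \<subseteq> I" "n \<in> {1..N}" "m \<in> {1..N}"
    and "p \<in> {0..1}" "q \<in> {0..1}"
  shows "measure_pmf.expectation (evidence_pmf N I X p q)
      (\<lambda>y. (if \<forall>i\<in>J. y (n, i) then 1 else 0) * (if \<forall>i\<in>J'. y (m, i) then 1 else 0)) =
    (if n = m then row_prob X p q n (J \<union> J') else row_prob X p q n J * row_prob X p q m J')"
proof -
  let ?r = "\<lambda>x. if X (fst x) (snd x) then q else p"
  let ?K = "{n} \<times> J \<union> {m} \<times> J'"
  have fin: "finite J" "finite J'"
    using assms finite_subset by auto
  have "(\<lambda>y. (if \<forall>i\<in>J. y (n, i) then 1 else 0) * (if \<forall>i\<in>J'. y (m, i) then 1 else 0 :: real)) =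
      (\<lambda>y. if \<forall>x\<in>?K. y x then 1 else 0)"
    by (auto simp: fun_eq_iff)
  moreover have "?K \<subseteq> {1..N} \<times> I"
    using assms by auto
  moreover have "(\<Prod>x\<in>{k} \<times> L. ?r x) = row_prob X p q k L" for k L
  proof -
    have "{k} \<times> L = Pair k ` L"
      by auto
    then show ?thesis
      by (simp add: row_prob_def prod.reindex inj_on_def)
  qed
  moreover have "(\<Prod>x\<in>?K. ?r x) = (\<Prod>x\<in>{n} \<times> J. ?r x) * (\<Prod>x\<in>{m} \<times> J'. ?r x)" if "n \<noteq> m"
    using fin that by (intro prod.union_disjoint) auto
  moreover have "?K = {n} \<times> (J \<union> J')" if "n = m"
    using that by auto
  ultimately show ?thesis
    using expectation_evidence_pmf_all[OF assms(1) _ assms(6,7), where K = ?K and X = X] by auto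
qed

lemma expectation_pert_count:
  assumes "finite I" "K \<subseteq> I" "p \<in> {0..1}" "q \<in> {0..1}"
  shows "measure_pmf.expectation (evidence_pmf N I X p q) (pert_count N K) =
    (\<Sum>n = 1..N. row_prob X p q n K)"
proof -
  have int: "integrable (evidence_pmf N I X p q) h" for h :: "_ \<Rightarrow> real"
    using finite_set_evidence_pmf[OF assms(1)] by (rule integrable_measure_pmf_finite)
  have row: "measure_pmf.expectation (evidence_pmf N I X p q)
      (\<lambda>y. if \<forall>i\<in>K. y (n, i) then 1 else 0) = row_prob X p q n K" if "n \<in> {1..N}" for n
    using expectation_row_indicator_mult[OF assms(1,2) empty_subsetI that that assms(3,4), where X = X]
    by simp
  have "finite K"
    using assms finite_subset by auto
  then show ?thesis
    by (simp add: pert_count_eq_sum_rows int Bochner_Integration.integral_sum row)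
qed

lemma expectation_pert_count_mult:
  assumes "finite I" "J \<subseteq> I" "J' \<subseteq> I" "p \<in> {0..1}" "q \<in> {0..1}"
  shows "measure_pmf.expectation (evidence_pmf N I X p q)
      (\<lambda>y. pert_count N J y * pert_count N J' y) =
    (\<Sum>n = 1..N. \<Sum>m = 1..N.
       if n = m then row_prob X p q n (J \<union> J') else row_prob X p q n J * row_prob X p q m J')"
proof -
  have int: "integrable (evidence_pmf N I X p q) h" for h :: "_ \<Rightarrow> real"
    using finite_set_evidence_pmf[OF assms(1)] by (rule integrable_measure_pmf_finite)
  have "finite J" "finite J'"
    using assms finite_subset by auto
  then show ?thesis
    using expectation_row_indicator_mult[OF assms(1-3) _ _ assms(4,5), where X = X]
    by (simp add: pert_count_eq_sum_rows sum_product int Bochner_Integration.integral_sum)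
qed

lemma pmf_covariance_pert_count:
  assumes "finite I" "J \<subseteq> I" "J' \<subseteq> I" "p \<in> {0..1}" "q \<in> {0..1}"
  shows "pmf_covariance (evidence_pmf N I X p q) (pert_count N J) (pert_count N J') =
    (\<Sum>n = 1..N. row_prob X p q n (J \<union> J') - row_prob X p q n J * row_prob X p q n J')"
proof -
  let ?P = "row_prob X p q"
  have "pmf_covariance (evidence_pmf N I X p q) (pert_count N J) (pert_count N J') =
      (\<Sum>n = 1..N. \<Sum>m = 1..N. (if n = m then ?P n (J \<union> J') else ?P n J * ?P m J') - ?P n J * ?P m J')"
    using assms
    by (simp add: pmf_covariance_eq_expectation_mult_diff finite_set_evidence_pmf
        expectation_pert_count expectation_pert_count_mult sum_product sum_subtractf)
  also have "\<dots> = (\<Sum>n = 1..N. \<Sum>m = 1..N. if m = n then ?P n (J \<union> J') - ?P n J * ?P n J' else 0)"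
    by (intro sum.cong) auto
  finally show ?thesis
    by simp
qed

lemma true_count_eq_sum:
  "real (true_count N X S) = (\<Sum>n = 1..N. if \<forall>i\<in>S. X n i then 1 else 0)"
  by (simp add: true_count_def sum.If_cases Int_def)

theorem theorem3:
  fixes N :: nat and I J J' :: "'i set" and X :: "nat \<Rightarrow> 'i \<Rightarrow> bool" and p q :: real
  assumes "N \<ge> 1" and "finite I"
    and "0 \<le> p" and "p < q" and "q \<le> 1"
    and "J \<subseteq> I" and "J' \<subseteq> I"
  shows "pmf_covariance (evidence_pmf N I X p q) (pert_count N J) (pert_count N J') =
    (\<Sum>S\<in>Pow (J \<union> J').
        real (true_count N X S) * (q - p) ^ card S * p ^ (card (J \<union> J') - card S) *
        (1 - (q + p) ^ card (S \<inter> (J \<inter> J')) * p ^ (card (J \<inter> J') - card (S \<inter> (J \<inter> J')))))"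
proof -
  let ?P = "row_prob X p q"
  have fin: "finite J" "finite J'"
    using assms finite_subset by auto
  have "pmf_covariance (evidence_pmf N I X p q) (pert_count N J) (pert_count N J') =
      (\<Sum>n = 1..N. ?P n (J \<union> J') - ?P n (J \<union> J') * ?P n (J \<inter> J'))"
    using assms pmf_covariance_pert_count[of I J J' p q N X]
    by (simp add: row_prob_def prod.union_inter[OF fin])
  also have "\<dots> = (\<Sum>n = 1..N. \<Sum>S\<in>Pow (J \<union> J'). (if \<forall>i\<in>S. X n i then 1 else 0) *
      ((q - p) ^ card S * p ^ (card (J \<union> J') - card S) *
       (1 - (q + p) ^ card (S \<inter> (J \<inter> J')) * p ^ (card (J \<inter> J') - card (S \<inter> (J \<inter> J'))))))"
    unfolding row_prob_def using fin by (intro sum.cong refl prod_if_diff_mult_eq_sum_Pow) auto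
  finally show ?thesis
    by (simp add: true_count_eq_sum sum_distrib_right mult.assoc sum.swap[of _ "Pow _"])
qed

end
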